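(* Let $(\Delta,U,\mu_\Delta)$ be an expanding Young tower with exponentially small tail, and let $g,g':\Delta\to\mathbb R$ belong to $L^p(\mu_\Delta)$ for every $p<2$, with $g-g'$ bounded. With $G(x)=\sum_{k=0}^{\omega(x)-1}g(U^k\pi_0x)$ and $G'(x)=\sum_{k=0}^{\omega(x)-1}g'(U^k\pi_0x)$, $$\int g\,(e^{itG}-1)\,d\mu_\Delta=\int g'\,(e^{itG'}-1)\,d\mu_\Delta+O(t)\quad\text{as }t\to0.$$
   Context: Expanding Young tower: probability space $(\Delta,\mu_\Delta)$, measure-preserving $U$, partition $\{\Delta_{k,p}\}_{0\le k<r_p}$ with $U:\Delta_{k,p}\to\Delta_{k+1,p}$ and $U:\Delta_{r_p-1,p}\to\Delta_0=\bigcup_m\Delta_{0,m}$ measurable isomorphisms (with a bounded distortion condition). $\Delta_n=\bigcup_p\Delta_{n,p}$; exponentially small tail: $\mu_\Delta(\Delta_n)=O(\rho^n)$ for some $\rho<1$. $\omega(x)=n$ for $x\in\Delta_n$; $\pi_0:\Delta\to\Delta_0$ is the projection to the basis, $\pi_0(U^kx')=x'$ for $x'\in\Delta_{0,p}$, $k<r_p$. *)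

theory Defs
  imports "HOL-Probability.Probability" "HOL-Library.Landau_Symbols"
begin

text \<open>Tower pieces: D k p is the set Delta_{k,p} (relevant for p in P and k < r p).\<close>

definition tower_level :: "nat set \<Rightarrow> (nat \<Rightarrow> nat) \<Rightarrow> (nat \<Rightarrow> nat \<Rightarrow> 'a set) \<Rightarrow> nat \<Rightarrow> 'a set" where
  "tower_level P r D n = (\<Union>p\<in>{p\<in>P. n < r p}. D n p)"

definition meas_iso :: "'a measure \<Rightarrow> ('a \<Rightarrow> 'a) \<Rightarrow> 'a set \<Rightarrow> 'a set \<Rightarrow> bool" where
  "meas_iso M U A B \<longleftrightarrow> bij_betw U A B \<and>
     U \<in> measurable (restrict_space M A) (restrict_space M B) \<and>
     the_inv_into A U \<in> measurable (restrict_space M B) (restrict_space M A)"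

definition same_piece :: "nat set \<Rightarrow> (nat \<Rightarrow> nat) \<Rightarrow> (nat \<Rightarrow> nat \<Rightarrow> 'a set) \<Rightarrow> 'a \<Rightarrow> 'a \<Rightarrow> bool" where
  "same_piece P r D a b \<longleftrightarrow> (\<exists>p\<in>P. \<exists>k<r p. a \<in> D k p \<and> b \<in> D k p)"

definition sep_time :: "('a \<Rightarrow> 'a) \<Rightarrow> nat set \<Rightarrow> (nat \<Rightarrow> nat) \<Rightarrow> (nat \<Rightarrow> nat \<Rightarrow> 'a set) \<Rightarrow> 'a \<Rightarrow> 'a \<Rightarrow> enat" where
  "sep_time U P r D x y =
     (if \<exists>n. \<not> same_piece P r D ((U^^n) x) ((U^^n) y)
      then enat (LEAST n. \<not> same_piece P r D ((U^^n) x) ((U^^n) y)) else \<infinity>)"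

definition expanding_young_tower ::
  "'a measure \<Rightarrow> ('a \<Rightarrow> 'a) \<Rightarrow> nat set \<Rightarrow> (nat \<Rightarrow> nat) \<Rightarrow> (nat \<Rightarrow> nat \<Rightarrow> 'a set) \<Rightarrow> bool" where
  "expanding_young_tower M U P r D \<longleftrightarrow>
     prob_space M \<and> U \<in> measurable M M \<and> distr M M U = M \<and> P \<noteq> {} \<and>
     (\<forall>p\<in>P. 0 < r p) \<and>
     (\<forall>p\<in>P. \<forall>k<r p. D k p \<in> sets M) \<and>
     (\<Union>p\<in>P. \<Union>k\<in>{..<r p}. D k p) = space M \<and>
     (\<forall>p\<in>P. \<forall>q\<in>P. \<forall>k<r p. \<forall>l<r q. (k, p) \<noteq> (l, q) \<longrightarrow> D k p \<inter> D l q = {}) \<and>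
     (\<forall>p\<in>P. \<forall>k. Suc k < r p \<longrightarrow> meas_iso M U (D k p) (D (Suc k) p)) \<and>
     (\<forall>p\<in>P. meas_iso M U (D (r p - 1) p) (tower_level P r D 0)) \<and>
     (\<exists>J C \<beta>. J \<in> borel_measurable M \<and> 0 < \<beta> \<and> \<beta> < 1 \<and> (\<forall>x\<in>space M. 0 < J x) \<and>
        (\<forall>p\<in>P. \<forall>k<r p. \<forall>B\<in>sets M. B \<subseteq> D k p \<longrightarrow>
            emeasure M (U ` B) = (\<integral>\<^sup>+x\<in>B. ennreal (J x) \<partial>M)) \<and>
        (\<forall>p\<in>P. \<forall>k<r p. \<forall>x\<in>D k p. \<forall>y\<in>D k p. \<forall>n.
            enat n \<le> sep_time U P r D (U x) (U y) \<longrightarrow> \<bar>ln (J x) - ln (J y)\<bar> \<le> C * \<beta> ^ n))"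

definition exp_small_tail :: "'a measure \<Rightarrow> nat set \<Rightarrow> (nat \<Rightarrow> nat) \<Rightarrow> (nat \<Rightarrow> nat \<Rightarrow> 'a set) \<Rightarrow> bool" where
  "exp_small_tail M P r D \<longleftrightarrow>
     (\<exists>C \<rho>. 0 < \<rho> \<and> \<rho> < 1 \<and> (\<forall>n. measure M (tower_level P r D n) \<le> C * \<rho> ^ n))"

definition height :: "nat set \<Rightarrow> (nat \<Rightarrow> nat) \<Rightarrow> (nat \<Rightarrow> nat \<Rightarrow> 'a set) \<Rightarrow> 'a \<Rightarrow> nat" where
  "height P r D x = (THE n. \<exists>p\<in>P. n < r p \<and> x \<in> D n p)"

definition proj0 :: "('a \<Rightarrow> 'a) \<Rightarrow> nat set \<Rightarrow> (nat \<Rightarrow> nat) \<Rightarrow> (nat \<Rightarrow> nat \<Rightarrow> 'a set) \<Rightarrow> 'a \<Rightarrow> 'a" where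
  "proj0 U P r D x = (THE y. \<exists>p\<in>P. \<exists>k<r p. y \<in> D 0 p \<and> (U^^k) y = x)"

definition tower_sum :: "('a \<Rightarrow> 'a) \<Rightarrow> nat set \<Rightarrow> (nat \<Rightarrow> nat) \<Rightarrow> (nat \<Rightarrow> nat \<Rightarrow> 'a set) \<Rightarrow> ('a \<Rightarrow> real) \<Rightarrow> 'a \<Rightarrow> real" where
  "tower_sum U P r D g x = (\<Sum>k<height P r D x. g ((U^^k) (proj0 U P r D x)))"

end

theory Submission
  imports Defs
begin

text \<open>
  For j \<le> n the map U^(n-j) undoes x \<mapsto> U^j (pi0 x) on Delta n, so by invariance of the measure
  the integral of phi (U^j (pi0 x)) over Delta n is at most the integral of phi. Together with the
  pointwise bound a \<le> c + a^(3/2) / sqrt c this gives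
  int_(Delta n) |g (U^j (pi0 x))| \<le> c * mu (Delta n) + ||g||_(3/2)^(3/2) / sqrt c,
  which is O(rho^(n/4)) for c = rho^(-n/2). Summing over j < n and over n shows that G and
  omega * |g'| are integrable. Finally |e^(ia) - e^(ib)| \<le> |a - b| and |G - G'| \<le> omega * sup |g - g'|
  bound the difference of the two integrands by |t| times an integrable function.
\<close>

lemma summable_of_nat_mult_power:
  fixes s :: real
  assumes "\<bar>s\<bar> < 1"
  shows "summable (\<lambda>n. real n * s ^ n)"
proof -
  have "summable (\<lambda>n. diffs (\<lambda>_. 1) n * s ^ n)"
    by (rule termdiff_converges[where K = 1]) (use assms summable_geometric in auto)
  then have "summable (\<lambda>n. s * (real (Suc n) * s ^ n))"
    by (intro summable_mult) (simp add: diffs_def)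
  then have "summable (\<lambda>n. real (n + 1) * s ^ (n + 1))"
    by (simp add: algebra_simps)
  then show ?thesis
    by (rule summable_iff_shift[THEN iffD1])
qed

lemma le_plus_powr_div_powr:
  fixes a c p :: real
  assumes "0 \<le> a" "0 < c" "1 \<le> p"
  shows "a \<le> c + a powr p / c powr (p - 1)"
proof (cases "a \<le> c")
  case True
  then show ?thesis using assms by (simp add: add_increasing2)
next
  case False
  then have "1 \<le> (a / c) powr (p - 1)"
    using assms by (intro ge_one_powr_ge_zero) auto
  then have "a \<le> a * (a / c) powr (p - 1)"
    using assms by (simp add: mult_le_cancel_left1)
  also have "\<dots> = a powr p / c powr (p - 1)"
    using assms False by (simp add: powr_divide powr_diff)
  finally show ?thesis using assms by simp
qed

lemma norm_iexp_diff_le: "norm (iexp a - iexp b) \<le> \<bar>a - b\<bar>"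
proof -
  have "iexp a - iexp b = iexp b * (iexp (a - b) - 1)"
    by (simp add: algebra_simps flip: exp_add)
  moreover have "norm (iexp (a - b) - 1) \<le> \<bar>a - b\<bar>"
    using iexp_approx1[of "a - b" 0] by simp
  ultimately show ?thesis by (simp add: norm_mult)
qed

lemma norm_mult_iexp_minus_one_diff_le:
  "norm (of_real a * (iexp (t * G) - 1) - of_real a' * (iexp (t * G') - 1))
     \<le> \<bar>t\<bar> * (\<bar>a - a'\<bar> * \<bar>G\<bar> + \<bar>a'\<bar> * \<bar>G - G'\<bar>)"
proof -
  have "of_real a * (iexp (t * G) - 1) - of_real a' * (iexp (t * G') - 1)
      = of_real (a - a') * (iexp (t * G) - 1) + of_real a' * (iexp (t * G) - iexp (t * G'))"
    by (simp add: algebra_simps)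
  then have "norm (of_real a * (iexp (t * G) - 1) - of_real a' * (iexp (t * G') - 1))
      \<le> \<bar>a - a'\<bar> * norm (iexp (t * G) - 1) + \<bar>a'\<bar> * norm (iexp (t * G) - iexp (t * G'))"
    by (metis norm_mult norm_of_real norm_triangle_ineq)
  also have "\<dots> \<le> \<bar>a - a'\<bar> * (\<bar>t\<bar> * \<bar>G\<bar>) + \<bar>a'\<bar> * (\<bar>t\<bar> * \<bar>G - G'\<bar>)"
  proof (intro add_mono mult_left_mono)
    show "norm (iexp (t * G) - 1) \<le> \<bar>t\<bar> * \<bar>G\<bar>"
      using norm_iexp_diff_le[of "t * G" 0] by (simp add: abs_mult)
    show "norm (iexp (t * G) - iexp (t * G')) \<le> \<bar>t\<bar> * \<bar>G - G'\<bar>"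
      using norm_iexp_diff_le[of "t * G" "t * G'"] by (simp add: abs_mult flip: right_diff_distrib)
  qed auto
  finally show ?thesis
    by (simp add: algebra_simps)
qed

lemma integrable_mult_iexp_minus_one:
  fixes a G :: "'a \<Rightarrow> real"
  assumes "integrable M a" "G \<in> borel_measurable M"
  shows "integrable M (\<lambda>x. of_real (a x) * (iexp (G x) - 1))"
proof (rule Bochner_Integration.integrable_bound)
  show "integrable M (\<lambda>x. 2 * \<bar>a x\<bar>)" using assms by auto
  show "(\<lambda>x. of_real (a x) * (iexp (G x) - 1)) \<in> borel_measurable M"
    using assms by measurable
  have "norm (iexp (G x) - 1) \<le> 2" for x
    using norm_triangle_ineq4[of "iexp (G x)" 1] by simp
  then show "AE x in M. norm (of_real (a x) * (iexp (G x) - 1)) \<le> norm (2 * \<bar>a x\<bar>)"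
    by (intro AE_I2) (simp add: norm_mult mult.commute mult_left_mono)
qed

lemma integral_in_bigo_of_real:
  fixes f :: "real \<Rightarrow> 'a \<Rightarrow> complex"
  assumes "\<And>t. integrable M (f t)" "integrable M h"
    and "\<And>t x. x \<in> space M \<Longrightarrow> norm (f t x) \<le> \<bar>t\<bar> * h x"
  shows "(\<lambda>t. \<integral>x. f t x \<partial>M) \<in> O[F](\<lambda>t. complex_of_real t)"
proof (rule bigoI[where c = "\<integral>x. h x \<partial>M"], intro always_eventually allI)
  fix t
  have "norm (\<integral>x. f t x \<partial>M) \<le> (\<integral>x. norm (f t x) \<partial>M)"
    by (rule integral_norm_bound)
  also have "\<dots> \<le> (\<integral>x. \<bar>t\<bar> * h x \<partial>M)"
    by (rule integral_mono) (use assms in auto)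
  also have "\<dots> = (\<integral>x. h x \<partial>M) * norm (complex_of_real t)"
    by simp
  finally show "norm (\<integral>x. f t x \<partial>M) \<le> (\<integral>x. h x \<partial>M) * norm (complex_of_real t)" .
qed

locale young_tower = prob_space M for M :: "'a measure" +
  fixes U :: "'a \<Rightarrow> 'a" and P :: "nat set" and r :: "nat \<Rightarrow> nat" and D :: "nat \<Rightarrow> nat \<Rightarrow> 'a set"
  assumes measurable_U [measurable]: "U \<in> M \<rightarrow>\<^sub>M M"
    and distr_U: "distr M M U = M"
    and sets_piece: "p \<in> P \<Longrightarrow> k < r p \<Longrightarrow> D k p \<in> sets M"
    and space_eq_pieces: "space M = (\<Union>p\<in>P. \<Union>k<r p. D k p)"
    and pieces_disjoint:
      "p \<in> P \<Longrightarrow> q \<in> P \<Longrightarrow> k < r p \<Longrightarrow> l < r q \<Longrightarrow> x \<in> D k p \<Longrightarrow> x \<in> D l q \<Longrightarrow> k = l \<and> p = q"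
    and meas_iso_step: "p \<in> P \<Longrightarrow> Suc k < r p \<Longrightarrow> meas_iso M U (D k p) (D (Suc k) p)"
    and top_into_base: "p \<in> P \<Longrightarrow> U ` D (r p - 1) p \<subseteq> tower_level P r D 0"

lemma expanding_young_tower_imp_young_tower:
  assumes "expanding_young_tower M U P r D"
  shows "young_tower M U P r D"
proof -
  note tower = assms[unfolded expanding_young_tower_def]
  have disjoint: "\<forall>p\<in>P. \<forall>q\<in>P. \<forall>k<r p. \<forall>l<r q. (k, p) \<noteq> (l, q) \<longrightarrow> D k p \<inter> D l q = {}"
    using tower by (elim conjE) assumption
  have top: "\<forall>p\<in>P. meas_iso M U (D (r p - 1) p) (tower_level P r D 0)"
    using tower by (elim conjE) assumption
  show ?thesis
  proof (intro young_tower.intro young_tower_axioms.intro)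
    show "k = l \<and> p = q" if "p \<in> P" "q \<in> P" "k < r p" "l < r q" "x \<in> D k p" "x \<in> D l q" for p q k l x
      using disjoint that by blast
    show "U ` D (r p - 1) p \<subseteq> tower_level P r D 0" if "p \<in> P" for p
      using top that by (simp add: meas_iso_def bij_betw_def)
  qed (use tower in \<open>elim conjE; simp\<close>)+
qed

context young_tower
begin

abbreviation \<omega> :: "'a \<Rightarrow> nat" where "\<omega> \<equiv> height P r D"
abbreviation \<pi>\<^sub>0 :: "'a \<Rightarrow> 'a" where "\<pi>\<^sub>0 \<equiv> proj0 U P r D"
abbreviation \<Delta> :: "nat \<Rightarrow> 'a set" where "\<Delta> \<equiv> tower_level P r D"

lemma measurable_funpow_U [measurable]: "U ^^ n \<in> M \<rightarrow>\<^sub>M M"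
  by (rule measurable_compose_n[OF measurable_U])

lemma piece_subset_space: "p \<in> P \<Longrightarrow> k < r p \<Longrightarrow> D k p \<subseteq> space M"
  using sets_piece sets.sets_into_space by blast

lemma obtain_piece:
  assumes "x \<in> space M"
  obtains p k where "p \<in> P" "k < r p" "x \<in> D k p"
  using assms space_eq_pieces by blast

lemma height_eqI: "p \<in> P \<Longrightarrow> n < r p \<Longrightarrow> x \<in> D n p \<Longrightarrow> \<omega> x = n"
  unfolding height_def by (rule the_equality) (use pieces_disjoint in blast)+

lemma bij_betw_U_step: "p \<in> P \<Longrightarrow> Suc k < r p \<Longrightarrow> bij_betw U (D k p) (D (Suc k) p)"
  using meas_iso_step unfolding meas_iso_def by blast

lemma bij_betw_funpow_piece: "p \<in> P \<Longrightarrow> n < r p \<Longrightarrow> bij_betw (U ^^ n) (D 0 p) (D n p)"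
proof (induction n)
  case (Suc n)
  then have "bij_betw (U \<circ> U ^^ n) (D 0 p) (D (Suc n) p)"
    using bij_betw_trans bij_betw_U_step by fastforce
  then show ?case by (simp add: comp_def)
qed simp

lemma proj0_eqI:
  assumes "p \<in> P" "k < r p" "y \<in> D 0 p" "(U ^^ k) y = x"
  shows "\<pi>\<^sub>0 x = y"
  unfolding proj0_def
proof (rule the_equality)
  show "\<exists>p\<in>P. \<exists>k<r p. y \<in> D 0 p \<and> (U ^^ k) y = x" using assms by blast
next
  fix z assume "\<exists>q\<in>P. \<exists>l<r q. z \<in> D 0 q \<and> (U ^^ l) z = x"
  then obtain q l where q: "q \<in> P" "l < r q" "z \<in> D 0 q" "(U ^^ l) z = x" by blast
  have "x \<in> D l q" "x \<in> D k p"
    using bij_betw_apply[OF bij_betw_funpow_piece[OF q(1,2)] q(3)]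
      bij_betw_apply[OF bij_betw_funpow_piece[OF assms(1,2)] assms(3)] q(4) assms(4) by auto
  then have "l = k" "q = p" using pieces_disjoint[OF q(1) assms(1) q(2) assms(2)] by auto
  then show "z = y"
    using q assms bij_betw_imp_inj_on[OF bij_betw_funpow_piece[OF assms(1,2)]]
    by (auto dest: inj_onD)
qed

lemma proj0_piece:
  assumes "p \<in> P" "n < r p" "x \<in> D n p"
  shows "\<pi>\<^sub>0 x \<in> D 0 p" "(U ^^ n) (\<pi>\<^sub>0 x) = x"
proof -
  obtain y where "y \<in> D 0 p" "(U ^^ n) y = x"
    using bij_betw_funpow_piece[OF assms(1,2)] assms(3) by (metis bij_betw_def imageE)
  with proj0_eqI[OF assms(1,2)] show "\<pi>\<^sub>0 x \<in> D 0 p" "(U ^^ n) (\<pi>\<^sub>0 x) = x" by auto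
qed

lemma measurable_proj0_piece:
  assumes "p \<in> P" "n < r p"
  shows "\<pi>\<^sub>0 \<in> restrict_space M (D n p) \<rightarrow>\<^sub>M M"
  using assms(2)
proof (induction n)
  case 0
  have "\<pi>\<^sub>0 x = x" if "x \<in> D 0 p" for x
    using proj0_eqI[OF assms(1) 0] that by simp
  then show ?case
    by (subst measurable_cong[where g = "\<lambda>x. x"]) (auto simp: space_restrict_space intro: measurable_restrict_space1)
next
  case (Suc n)
  let ?V = "the_inv_into (D n p) U"
  have bij: "bij_betw U (D n p) (D (Suc n) p)" using bij_betw_U_step assms Suc by blast
  have "\<pi>\<^sub>0 x = \<pi>\<^sub>0 (?V x)" if x: "x \<in> D (Suc n) p" for x
  proof -
    have V: "?V x \<in> D n p" "U (?V x) = x"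
      using bij x by (auto intro: bij_betw_apply bij_betw_the_inv_into f_the_inv_into_f_bij_betw)
    then have "(U ^^ Suc n) (\<pi>\<^sub>0 (?V x)) = x"
      using proj0_piece[OF assms(1) _ V(1)] Suc by simp
    then show ?thesis
      using proj0_eqI[OF assms(1) Suc.prems] proj0_piece[OF assms(1) _ V(1)] Suc by simp
  qed
  moreover have "?V \<in> restrict_space M (D (Suc n) p) \<rightarrow>\<^sub>M restrict_space M (D n p)"
    using meas_iso_step[OF assms(1) Suc.prems] unfolding meas_iso_def by blast
  ultimately show ?case
    using measurable_comp Suc
    by (subst measurable_cong[where g = "\<pi>\<^sub>0 \<circ> ?V"]) (auto simp: space_restrict_space)
qed

lemma measurable_height_proj0:
  assumes "\<And>n. F n \<in> M \<rightarrow>\<^sub>M N"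
  shows "(\<lambda>x. F (\<omega> x) (\<pi>\<^sub>0 x)) \<in> M \<rightarrow>\<^sub>M N"
proof (rule measurable_piecewise_restrict[where C = "(\<lambda>(n, p). D n p) ` {(n, p). p \<in> P \<and> n < r p}"])
  show "countable ((\<lambda>(n, p). D n p) ` {(n, p). p \<in> P \<and> n < r p})"
    by (intro countable_image) simp
  show "space M \<subseteq> \<Union> ((\<lambda>(n, p). D n p) ` {(n, p). p \<in> P \<and> n < r p})"
    using space_eq_pieces by fastforce
  fix \<Omega> assume "\<Omega> \<in> (\<lambda>(n, p). D n p) ` {(n, p). p \<in> P \<and> n < r p}"
  then obtain n p where np: "p \<in> P" "n < r p" "\<Omega> = D n p" by auto
  then show "\<Omega> \<inter> space M \<in> sets M" using sets_piece by auto
  have "(\<lambda>x. F n (\<pi>\<^sub>0 x)) \<in> restrict_space M (D n p) \<rightarrow>\<^sub>M N"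
    using measurable_comp[OF measurable_proj0_piece[OF np(1,2)] assms] by (simp add: comp_def)
  then show "(\<lambda>x. F (\<omega> x) (\<pi>\<^sub>0 x)) \<in> restrict_space M \<Omega> \<rightarrow>\<^sub>M N"
    unfolding np(3)
    by (subst measurable_cong[where g = "\<lambda>x. F n (\<pi>\<^sub>0 x)"]) (auto simp: space_restrict_space height_eqI[OF np(1,2)])
qed

lemma measurable_height [measurable]: "\<omega> \<in> M \<rightarrow>\<^sub>M count_space UNIV"
  using measurable_height_proj0[of "\<lambda>n _. n"] by simp

lemma measurable_proj0 [measurable]: "\<pi>\<^sub>0 \<in> M \<rightarrow>\<^sub>M M"
  using measurable_height_proj0[of "\<lambda>_ x. x"] by simp

lemma measurable_tower_sum [measurable]:
  assumes [measurable]: "g \<in> borel_measurable M"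
  shows "tower_sum U P r D g \<in> borel_measurable M"
  unfolding tower_sum_def
  by (rule measurable_height_proj0[of "\<lambda>n y. \<Sum>k<n. g ((U ^^ k) y)"]) measurable

lemma tower_level_eq: "\<Delta> n = {x \<in> space M. \<omega> x = n}"
proof (intro equalityI subsetI)
  fix x assume "x \<in> \<Delta> n"
  then obtain p where "p \<in> P" "n < r p" "x \<in> D n p" unfolding tower_level_def by blast
  then show "x \<in> {x \<in> space M. \<omega> x = n}" using height_eqI piece_subset_space by blast
next
  fix x assume x: "x \<in> {x \<in> space M. \<omega> x = n}"
  then obtain p k where "p \<in> P" "k < r p" "x \<in> D k p" by (blast elim: obtain_piece)
  moreover from this have "k = n" using height_eqI x by blast
  ultimately show "x \<in> \<Delta> n" unfolding tower_level_def by blast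
qed

lemma sets_tower_level [measurable]: "\<Delta> n \<in> sets M"
  unfolding tower_level_eq by measurable

lemma funpow_proj0_in_space: "x \<in> space M \<Longrightarrow> (U ^^ j) (\<pi>\<^sub>0 x) \<in> space M"
  by (meson measurable_funpow_U measurable_proj0 measurable_space)

lemma funpow_height_proj0: "x \<in> space M \<Longrightarrow> (U ^^ \<omega> x) (\<pi>\<^sub>0 x) = x"
  by (metis obtain_piece height_eqI proj0_piece(2))

lemma preimage_U_piece:
  assumes "z \<in> space M" "U z \<in> D (Suc k) p" "p \<in> P" "Suc k < r p"
  shows "z \<in> D k p"
proof -
  obtain q l where q: "q \<in> P" "l < r q" "z \<in> D l q" using obtain_piece assms(1) by blast
  show ?thesis
  proof (cases "Suc l < r q")
    case True
    have "U z \<in> D (Suc l) q" using bij_betw_apply[OF bij_betw_U_step[OF q(1) True] q(3)] .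
    then have "Suc l = Suc k \<and> q = p"
      using pieces_disjoint[OF q(1) assms(3) True assms(4) _ assms(2)] by blast
    then show ?thesis using q by simp
  next
    case False
    then have "l = r q - 1" using q(2) by simp
    then have "U z \<in> \<Delta> 0" using top_into_base[OF q(1)] q(3) by blast
    then obtain q' where "q' \<in> P" "0 < r q'" "U z \<in> D 0 q'" unfolding tower_level_def by blast
    then show ?thesis using pieces_disjoint[OF _ assms(3) _ assms(4) _ assms(2)] by blast
  qed
qed

lemma preimage_funpow_piece:
  assumes "z \<in> space M" "(U ^^ m) z \<in> D n p" "p \<in> P" "n < r p" "m \<le> n"
  shows "z \<in> D (n - m) p"
  using assms
proof (induction m arbitrary: z)
  case (Suc m)
  have "(U ^^ m) (U z) \<in> D n p" using Suc.prems(2) by (simp add: funpow_swap1)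
  then have "U z \<in> D (Suc (n - Suc m)) p"
    using Suc.IH[of "U z"] Suc.prems measurable_space[OF measurable_U] Suc_diff_Suc by simp
  then show ?case using preimage_U_piece Suc.prems by (simp add: Suc_diff_Suc)
qed simp

lemma funpow_proj0_funpow:
  assumes z: "z \<in> space M" and "m \<le> n" and height: "\<omega> ((U ^^ m) z) = n"
  shows "(U ^^ (n - m)) (\<pi>\<^sub>0 ((U ^^ m) z)) = z"
proof -
  obtain p k where p: "p \<in> P" "k < r p" "(U ^^ m) z \<in> D k p"
    using obtain_piece measurable_space[OF measurable_funpow_U z] by blast
  with height have "k = n" using height_eqI by blast
  with p have "z \<in> D (n - m) p"
    using preimage_funpow_piece z \<open>m \<le> n\<close> by blast
  then have base: "\<pi>\<^sub>0 z \<in> D 0 p" and up: "(U ^^ (n - m)) (\<pi>\<^sub>0 z) = z"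
    using proj0_piece p \<open>k = n\<close> by (metis diff_le_self le_less_trans)+
  have "(U ^^ n) (\<pi>\<^sub>0 z) = (U ^^ m) z"
    using up \<open>m \<le> n\<close> by (metis funpow_add le_add_diff_inverse comp_apply)
  then have "\<pi>\<^sub>0 ((U ^^ m) z) = \<pi>\<^sub>0 z"
    using proj0_eqI p base \<open>k = n\<close> by blast
  with up show ?thesis by simp
qed

lemma distr_funpow_U: "distr M M (U ^^ m) = M"
proof (induction m)
  case (Suc m)
  have "distr M M (U ^^ Suc m) = distr (distr M M (U ^^ m)) M U"
    by (simp add: distr_distr comp_def)
  also have "\<dots> = M" using Suc distr_U by simp
  finally show ?case .
qed (simp add: distr_id2)

lemma nn_integral_level_funpow_proj0_le:
  assumes [measurable]: "\<phi> \<in> borel_measurable M" and "j \<le> n"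
  shows "(\<integral>\<^sup>+x\<in>\<Delta> n. \<phi> ((U ^^ j) (\<pi>\<^sub>0 x)) \<partial>M) \<le> (\<integral>\<^sup>+x. \<phi> x \<partial>M)"
proof -
  let ?f = "\<lambda>x. \<phi> ((U ^^ j) (\<pi>\<^sub>0 x)) * indicator (\<Delta> n) x"
  have "(\<integral>\<^sup>+x. ?f x \<partial>M) = (\<integral>\<^sup>+x. ?f x \<partial>distr M M (U ^^ (n - j)))"
    by (simp add: distr_funpow_U)
  also have "\<dots> = (\<integral>\<^sup>+z. ?f ((U ^^ (n - j)) z) \<partial>M)"
    by (rule nn_integral_distr) measurable
  also have "\<dots> \<le> (\<integral>\<^sup>+z. \<phi> z \<partial>M)"
  proof (rule nn_integral_mono)
    fix z assume z: "z \<in> space M"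
    show "?f ((U ^^ (n - j)) z) \<le> \<phi> z"
    proof (cases "(U ^^ (n - j)) z \<in> \<Delta> n")
      case True
      then have "\<omega> ((U ^^ (n - j)) z) = n" by (simp add: tower_level_eq)
      then have "(U ^^ j) (\<pi>\<^sub>0 ((U ^^ (n - j)) z)) = z"
        using funpow_proj0_funpow[OF z, of "n - j" n] \<open>j \<le> n\<close> by simp
      then show ?thesis using True by simp
    qed simp
  qed
  finally show ?thesis .
qed

lemma nn_integral_level_bound:
  assumes [measurable]: "g \<in> borel_measurable M" and "j \<le> n" "0 < c" "1 \<le> p"
  shows "(\<integral>\<^sup>+x\<in>\<Delta> n. ennreal \<bar>g ((U ^^ j) (\<pi>\<^sub>0 x))\<bar> \<partial>M)
    \<le> ennreal c * emeasure M (\<Delta> n) + ennreal (1 / c powr (p - 1)) * (\<integral>\<^sup>+x. ennreal (\<bar>g x\<bar> powr p) \<partial>M)"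
proof -
  let ?h = "\<lambda>x. ennreal (\<bar>g x\<bar> powr p)"
  have "(\<integral>\<^sup>+x\<in>\<Delta> n. ennreal \<bar>g ((U ^^ j) (\<pi>\<^sub>0 x))\<bar> \<partial>M)
      \<le> (\<integral>\<^sup>+x. ennreal c * indicator (\<Delta> n) x + ennreal (1 / c powr (p - 1)) * (?h ((U ^^ j) (\<pi>\<^sub>0 x)) * indicator (\<Delta> n) x) \<partial>M)"
  proof (intro nn_integral_mono)
    fix x
    have "\<bar>g ((U ^^ j) (\<pi>\<^sub>0 x))\<bar> \<le> c + 1 / c powr (p - 1) * \<bar>g ((U ^^ j) (\<pi>\<^sub>0 x))\<bar> powr p"
      using le_plus_powr_div_powr[of _ c p] assms by simp
    then have "ennreal \<bar>g ((U ^^ j) (\<pi>\<^sub>0 x))\<bar> \<le> ennreal c + ennreal (1 / c powr (p - 1)) * ?h ((U ^^ j) (\<pi>\<^sub>0 x))"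
      using assms by (simp add: ennreal_plus[symmetric] ennreal_mult[symmetric] del: ennreal_plus)
    then show "ennreal \<bar>g ((U ^^ j) (\<pi>\<^sub>0 x))\<bar> * indicator (\<Delta> n) x
      \<le> ennreal c * indicator (\<Delta> n) x + ennreal (1 / c powr (p - 1)) * (?h ((U ^^ j) (\<pi>\<^sub>0 x)) * indicator (\<Delta> n) x)"
      by (simp split: split_indicator)
  qed
  also have "\<dots> = ennreal c * emeasure M (\<Delta> n) + ennreal (1 / c powr (p - 1)) * (\<integral>\<^sup>+x\<in>\<Delta> n. ?h ((U ^^ j) (\<pi>\<^sub>0 x)) \<partial>M)"
    by (simp add: nn_integral_add nn_integral_cmult)
  also have "\<dots> \<le> ennreal c * emeasure M (\<Delta> n) + ennreal (1 / c powr (p - 1)) * (\<integral>\<^sup>+x. ?h x \<partial>M)"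
    using nn_integral_level_funpow_proj0_le[of ?h j n] assms by (intro add_left_mono mult_left_mono) simp_all
  finally show ?thesis .
qed

lemma level_integral_exponential_bound:
  assumes "exp_small_tail M P r D" and [measurable]: "g \<in> borel_measurable M"
    and "integrable M (\<lambda>x. \<bar>g x\<bar> powr (3/2))"
  obtains c s where "0 \<le> c" "0 < s" "s < 1"
    "\<And>n j. j \<le> n \<Longrightarrow> (\<integral>\<^sup>+x\<in>\<Delta> n. ennreal \<bar>g ((U ^^ j) (\<pi>\<^sub>0 x))\<bar> \<partial>M) \<le> ennreal (c * s ^ n)"
proof -
  obtain C \<rho> where \<rho>: "0 < \<rho>" "\<rho> < 1" and tail: "\<And>n. measure M (\<Delta> n) \<le> C * \<rho> ^ n"
    using assms(1) unfolding exp_small_tail_def by blast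
  define K where "K = (\<integral>x. \<bar>g x\<bar> powr (3/2) \<partial>M)"
  have K: "(\<integral>\<^sup>+x. ennreal (\<bar>g x\<bar> powr (3/2)) \<partial>M) = ennreal K" "0 \<le> K"
    unfolding K_def using assms(3) by (auto intro: nn_integral_eq_integral integral_nonneg_AE)
  have "0 \<le> C" using order.trans[OF measure_nonneg tail[of 0]] by simp
  define s where "s = sqrt (sqrt \<rho>)"
  have s: "0 < s" "s < 1"
    using \<rho> by (simp_all add: s_def real_sqrt_lt_1_iff)
  have "s ^ 4 = (s\<^sup>2)\<^sup>2"
    by (simp flip: power_mult)
  also have "\<dots> = \<rho>"
    using \<rho> by (simp add: s_def)
  finally have \<rho>_eq: "\<rho> = s ^ 4" ..
  show ?thesis
  proof (rule that[of "C + K" s])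
    fix n j :: nat assume "j \<le> n"
    \<comment> \<open>The threshold s^(-2n) makes both terms of the level bound O(s^n).\<close>
    define c where "c = 1 / (s ^ n)\<^sup>2"
    have "0 < c" using s by (simp add: c_def)
    have "c powr (3/2 - 1) = sqrt c"
      using \<open>0 < c\<close> by (simp add: powr_half_sqrt)
    also have "\<dots> = 1 / s ^ n"
      using s by (simp add: c_def real_sqrt_divide)
    finally have c: "0 < c" "1 / c powr (3/2 - 1) = s ^ n"
      using \<open>0 < c\<close> by simp_all
    have "(\<integral>\<^sup>+x\<in>\<Delta> n. ennreal \<bar>g ((U ^^ j) (\<pi>\<^sub>0 x))\<bar> \<partial>M)
        \<le> ennreal c * ennreal (measure M (\<Delta> n)) + ennreal (s ^ n) * ennreal K"
      using nn_integral_level_bound[OF assms(2) \<open>j \<le> n\<close> c(1), of "3/2"]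
      unfolding c(2) K(1) emeasure_eq_measure by simp
    also have "\<dots> = ennreal (c * measure M (\<Delta> n) + s ^ n * K)"
      using c(1) s(1) K(2) by (simp add: ennreal_mult ennreal_plus)
    also have "\<dots> \<le> ennreal ((C + K) * s ^ n)"
    proof (rule ennreal_leI)
      have "\<rho> ^ n = (s ^ n) ^ 4"
        unfolding \<rho>_eq by (metis power_mult mult.commute)
      then have "c * measure M (\<Delta> n) \<le> c * (C * (s ^ n) ^ 4)"
        using tail[of n] c(1) by simp
      also have "\<dots> = C * (s ^ n)\<^sup>2"
        using s by (simp add: c_def field_simps eval_nat_numeral)
      also have "\<dots> \<le> C * s ^ n"
        using s \<open>0 \<le> C\<close> by (intro mult_left_mono) (simp_all add: power2_eq_square mult_le_cancel_right1 power_le_one)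
      finally show "c * measure M (\<Delta> n) + s ^ n * K \<le> (C + K) * s ^ n"
        by (simp add: algebra_simps)
    qed
    finally show "(\<integral>\<^sup>+x\<in>\<Delta> n. ennreal \<bar>g ((U ^^ j) (\<pi>\<^sub>0 x))\<bar> \<partial>M) \<le> ennreal ((C + K) * s ^ n)" .
  qed (use \<open>0 \<le> C\<close> K s in simp_all)
qed

lemma nn_integral_sum_below_height_finite:
  fixes f :: "nat \<Rightarrow> 'a \<Rightarrow> ennreal"
  assumes [measurable]: "\<And>j. f j \<in> borel_measurable M" and "0 \<le> c" "0 \<le> s" "s < 1"
    and level: "\<And>n j. j < n \<Longrightarrow> (\<integral>\<^sup>+x\<in>\<Delta> n. f j x \<partial>M) \<le> ennreal (c * s ^ n)"
  shows "(\<integral>\<^sup>+x. (\<Sum>j<\<omega> x. f j x) \<partial>M) < \<infinity>"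
proof -
  have "(\<integral>\<^sup>+x. (\<Sum>j<\<omega> x. f j x) \<partial>M) = (\<integral>\<^sup>+x. (\<Sum>n. \<Sum>j<n. f j x * indicator (\<Delta> n) x) \<partial>M)"
  proof (rule nn_integral_cong)
    fix x assume "x \<in> space M"
    then have "indicator (\<Delta> n) x = (if n = \<omega> x then 1 else 0 :: ennreal)" for n
      by (auto simp: tower_level_eq)
    then show "(\<Sum>j<\<omega> x. f j x) = (\<Sum>n. \<Sum>j<n. f j x * indicator (\<Delta> n) x)"
      by (subst suminf_finite[of "{\<omega> x}"]) auto
  qed
  also have "\<dots> = (\<Sum>n. \<integral>\<^sup>+x. (\<Sum>j<n. f j x * indicator (\<Delta> n) x) \<partial>M)"
    by (rule nn_integral_suminf) measurable
  also have "\<dots> = (\<Sum>n. \<Sum>j<n. \<integral>\<^sup>+x\<in>\<Delta> n. f j x \<partial>M)"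
    by (subst nn_integral_sum) measurable
  also have "\<dots> \<le> (\<Sum>n. ennreal (real n * (c * s ^ n)))"
  proof (intro suminf_le summableI)
    fix n
    have "(\<Sum>j<n. \<integral>\<^sup>+x\<in>\<Delta> n. f j x \<partial>M) \<le> (\<Sum>j<n. ennreal (c * s ^ n))"
      by (intro sum_mono level) simp
    then show "(\<Sum>j<n. \<integral>\<^sup>+x\<in>\<Delta> n. f j x \<partial>M) \<le> ennreal (real n * (c * s ^ n))"
      using assms by (simp add: ennreal_of_nat_eq_real_of_nat ennreal_mult)
  qed
  also have "\<dots> < \<infinity>"
  proof -
    have "summable (\<lambda>n. c * (real n * s ^ n))"
      using summable_of_nat_mult_power[of s] assms by (intro summable_mult) simp
    then have "(\<Sum>n. ennreal (real n * (c * s ^ n))) \<noteq> \<top>"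
      using assms by (intro ennreal_suminf_neq_top) (simp_all add: mult.left_commute)
    then show ?thesis by (simp add: less_top)
  qed
  finally show ?thesis .
qed

lemma integrable_tower_sum:
  assumes "exp_small_tail M P r D" and [measurable]: "g \<in> borel_measurable M"
    and "integrable M (\<lambda>x. \<bar>g x\<bar> powr (3/2))"
  shows "integrable M (tower_sum U P r D g)"
proof (rule integrableI_bounded)
  obtain c s where "0 \<le> c" "0 < s" "s < 1"
    and level: "\<And>n j. j \<le> n \<Longrightarrow> (\<integral>\<^sup>+x\<in>\<Delta> n. ennreal \<bar>g ((U ^^ j) (\<pi>\<^sub>0 x))\<bar> \<partial>M) \<le> ennreal (c * s ^ n)"
    using level_integral_exponential_bound[OF assms] by blast
  have "(\<integral>\<^sup>+x. ennreal (norm (tower_sum U P r D g x)) \<partial>M)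
      \<le> (\<integral>\<^sup>+x. (\<Sum>j<\<omega> x. ennreal \<bar>g ((U ^^ j) (\<pi>\<^sub>0 x))\<bar>) \<partial>M)"
    by (intro nn_integral_mono) (simp add: tower_sum_def sum_ennreal sum_abs ennreal_leI)
  also have "\<dots> < \<infinity>"
    by (rule nn_integral_sum_below_height_finite[where c = c and s = s])
      (use \<open>0 \<le> c\<close> \<open>0 < s\<close> \<open>s < 1\<close> level in auto)
  finally show "(\<integral>\<^sup>+x. ennreal (norm (tower_sum U P r D g x)) \<partial>M) < \<infinity>" .
qed simp

lemma integrable_height_mult:
  assumes "exp_small_tail M P r D" and [measurable]: "g \<in> borel_measurable M"
    and "integrable M (\<lambda>x. \<bar>g x\<bar> powr (3/2))"
  shows "integrable M (\<lambda>x. real (\<omega> x) * \<bar>g x\<bar>)"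
proof (rule integrableI_bounded)
  obtain c s where "0 \<le> c" "0 < s" "s < 1"
    and level: "\<And>n j. j \<le> n \<Longrightarrow> (\<integral>\<^sup>+x\<in>\<Delta> n. ennreal \<bar>g ((U ^^ j) (\<pi>\<^sub>0 x))\<bar> \<partial>M) \<le> ennreal (c * s ^ n)"
    using level_integral_exponential_bound[OF assms] by blast
  have "(\<integral>\<^sup>+x\<in>\<Delta> n. ennreal \<bar>g x\<bar> \<partial>M) = (\<integral>\<^sup>+x\<in>\<Delta> n. ennreal \<bar>g ((U ^^ n) (\<pi>\<^sub>0 x))\<bar> \<partial>M)" for n
    by (intro nn_integral_cong) (auto simp: tower_level_eq funpow_height_proj0 split: split_indicator)
  then have "(\<integral>\<^sup>+x\<in>\<Delta> n. ennreal \<bar>g x\<bar> \<partial>M) \<le> ennreal (c * s ^ n)" for n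
    using level[of n n] by simp
  then have "(\<integral>\<^sup>+x. (\<Sum>j<\<omega> x. ennreal \<bar>g x\<bar>) \<partial>M) < \<infinity>"
    by (intro nn_integral_sum_below_height_finite[where c = c and s = s])
      (use \<open>0 \<le> c\<close> \<open>0 < s\<close> \<open>s < 1\<close> in auto)
  then show "(\<integral>\<^sup>+x. ennreal (norm (real (\<omega> x) * \<bar>g x\<bar>)) \<partial>M) < \<infinity>"
    by (simp add: abs_mult ennreal_mult' ennreal_of_nat_eq_real_of_nat)
qed measurable

lemma abs_tower_sum_diff_le:
  assumes "\<forall>x\<in>space M. \<bar>g x - g' x\<bar> \<le> B" and "x \<in> space M"
  shows "\<bar>tower_sum U P r D g x - tower_sum U P r D g' x\<bar> \<le> real (\<omega> x) * B"
proof -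
  have "\<bar>tower_sum U P r D g x - tower_sum U P r D g' x\<bar>
      \<le> (\<Sum>k<\<omega> x. \<bar>g ((U ^^ k) (\<pi>\<^sub>0 x)) - g' ((U ^^ k) (\<pi>\<^sub>0 x))\<bar>)"
    unfolding tower_sum_def sum_subtractf[symmetric] by (rule sum_abs)
  also have "\<dots> \<le> (\<Sum>k<\<omega> x. B)"
    using assms funpow_proj0_in_space by (intro sum_mono) blast
  finally show ?thesis by simp
qed

end

theorem mainTheorem13:
  fixes M :: "'a measure" and U :: "'a \<Rightarrow> 'a" and P :: "nat set" and r :: "nat \<Rightarrow> nat"
    and D :: "nat \<Rightarrow> nat \<Rightarrow> 'a set" and g g' :: "'a \<Rightarrow> real"
  assumes tower: "expanding_young_tower M U P r D"
    and tail: "exp_small_tail M P r D"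
    and g_meas: "g \<in> borel_measurable M" and g'_meas: "g' \<in> borel_measurable M"
    and g_Lp: "\<And>p::real. 1 \<le> p \<Longrightarrow> p < 2 \<Longrightarrow> integrable M (\<lambda>x. \<bar>g x\<bar> powr p)"
    and g'_Lp: "\<And>p::real. 1 \<le> p \<Longrightarrow> p < 2 \<Longrightarrow> integrable M (\<lambda>x. \<bar>g' x\<bar> powr p)"
    and bdd: "\<exists>B. \<forall>x\<in>space M. \<bar>g x - g' x\<bar> \<le> B"
  shows "(\<lambda>t::real.
            (\<integral>x. complex_of_real (g x) * (exp (\<i> * complex_of_real (t * tower_sum U P r D g x)) - 1) \<partial>M)
          - (\<integral>x. complex_of_real (g' x) * (exp (\<i> * complex_of_real (t * tower_sum U P r D g' x)) - 1) \<partial>M))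
         \<in> O[at 0](\<lambda>t. complex_of_real t)"
proof -
  interpret young_tower M U P r D
    using tower by (rule expanding_young_tower_imp_young_tower)
  note [measurable] = g_meas g'_meas
  let ?G = "tower_sum U P r D g" and ?G' = "tower_sum U P r D g'"
  let ?f = "\<lambda>t x. of_real (g x) * (iexp (t * ?G x) - 1)" and ?f' = "\<lambda>t x. of_real (g' x) * (iexp (t * ?G' x) - 1)"
  obtain B where B: "\<forall>x\<in>space M. \<bar>g x - g' x\<bar> \<le> B" using bdd by blast
  have "integrable M g" "integrable M g'"
    using g_Lp[of 1] g'_Lp[of 1] by (simp_all add: integrable_abs_iff)
  then have f: "integrable M (?f t)" "integrable M (?f' t)" for t
    by (intro integrable_mult_iexp_minus_one; measurable)+
  have "integrable M ?G" "integrable M (\<lambda>x. real (\<omega> x) * \<bar>g' x\<bar>)"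
    using integrable_tower_sum[OF tail g_meas] integrable_height_mult[OF tail g'_meas] g_Lp g'_Lp by simp_all
  then have h: "integrable M (\<lambda>x. B * \<bar>?G x\<bar> + \<bar>g' x\<bar> * (real (\<omega> x) * B))"
    by (simp add: mult.commute mult.left_commute)
  have "(\<lambda>t. (\<integral>x. ?f t x \<partial>M) - (\<integral>x. ?f' t x \<partial>M)) = (\<lambda>t. \<integral>x. ?f t x - ?f' t x \<partial>M)"
    using f by simp
  also have "\<dots> \<in> O[at 0](\<lambda>t. complex_of_real t)"
  proof (rule integral_in_bigo_of_real[OF _ h])
    fix t x assume "x \<in> space M"
    then show "norm (?f t x - ?f' t x) \<le> \<bar>t\<bar> * (B * \<bar>?G x\<bar> + \<bar>g' x\<bar> * (real (\<omega> x) * B))"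
      using norm_mult_iexp_minus_one_diff_le[of "g x" t "?G x" "g' x" "?G' x"]
        abs_tower_sum_diff_le[OF B] B
      by (smt (verit) abs_ge_zero mult_left_mono mult_right_mono)
  qed (use f in simp)
  finally show ?thesis .
qed

end
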